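(* Let $l$ be a positive integer, $\epsilon\in(0,1)$, $\theta\in[0,1)$, and let $N$ be a positive integer with $N\ge 5.34\ln(4l/\epsilon)$. For $k=1,\dots,l$ let $N_{x,k}\sim\mathrm{Bin}\big(N,(1+\cos(2\pi 2^{k-1}\theta))/2\big)$ and $N_{y,k}\sim\mathrm{Bin}\big(N,(1+\sin(2\pi 2^{k-1}\theta))/2\big)$, all $2l$ variables independent. Put $t_k=\frac{1}{2\pi}\big(\mathrm{atan2}(2N_{y,k}/N-1,2N_{x,k}/N-1)\big)_{\mathrm{mod}\,2\pi}$ and $x(k)=(t_k-1/6)_{\mathrm{mod}\,1}$. Define $z(1)=x(1)$ and, for $k=1,\dots,l-1$, with $d_k=(x(k+1)-2z(k))_{\mathrm{mod}\,1}$: $z(k+1)=2z(k)+d_k$ if $d_k\in[0,1/3)$, $z(k+1)=2z(k)+1/3$ if $d_k\in[1/3,2/3)$, $z(k+1)=2z(k)$ if $d_k\in[2/3,1)$. Then with probability at least $1-\epsilon$, $\theta$ lies in the arc $\big[z(l)/2^{l-1},(z(l)+1/3)/2^{l-1}\big]$ on the circle of unit circumference (length $1/(3\cdot2^{l-1})$); in particular $\hat\theta=\big((z(l)+1/6)/2^{l-1}\big)_{\mathrm{mod}\,1}$ satisfies $\Pr\big(|\hat\theta-\theta|_1\le 1/(3\cdot 2^l)\big)\ge 1-\epsilon$.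
   Context: This models iterative phase estimation of $U_\theta=\mathrm{diag}(1,e^{i2\pi\theta})$ using a single qubit: at stage $k$, $U_\theta$ is applied $2^{k-1}$ times to $|\psi_x\rangle=(|0\rangle+|1\rangle)/\sqrt2$, and the result is measured $N$ times with $\{|\psi_x\rangle\langle\psi_x|,\mathbb{I}-|\psi_x\rangle\langle\psi_x|\}$ and $N$ times with $\{|\psi_y\rangle\langle\psi_y|,\mathbb{I}-|\psi_y\rangle\langle\psi_y|\}$, $|\psi_y\rangle=(|0\rangle+i|1\rangle)/\sqrt2$; $N_{x,k},N_{y,k}$ count outcomes $1$. $(a)_{\mathrm{mod}\,c}$ is the representative of $a$ in $[0,c)$; an arc $[a,b]$ with $b-a<1$ is $\{t_{\mathrm{mod}\,1}:t\in[a,b]\}$; $|\hat\theta-\theta|_1=\min((\hat\theta-\theta)_{\mathrm{mod}\,1},(\theta-\hat\theta)_{\mathrm{mod}\,1})$; $\mathrm{atan2}$ is the polar angle (any fixed convention at $(0,0)$). *)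

theory Defs
  imports "HOL-Probability.Probability"
begin

definition rmod :: "real \<Rightarrow> real \<Rightarrow> real" where
  "rmod a c = a - c * of_int \<lfloor>a / c\<rfloor>"

text \<open>atan2(y,x): polar angle of the point (x,y); convention Arg 0 = 0 at the origin.\<close>
definition atan2 :: "real \<Rightarrow> real \<Rightarrow> real" where
  "atan2 y x = Arg (Complex x y)"

text \<open>Membership in the arc [a,b] (with b - a < 1) of the circle of unit circumference.\<close>
definition on_arc :: "real \<Rightarrow> real \<Rightarrow> real \<Rightarrow> bool" where
  "on_arc th a b \<longleftrightarrow> (\<exists>t. a \<le> t \<and> t \<le> b \<and> rmod t 1 = th)"

definition circ_dist :: "real \<Rightarrow> real \<Rightarrow> real" where
  "circ_dist a b = min (rmod (a - b) 1) (rmod (b - a) 1)"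

definition t_est :: "nat \<Rightarrow> nat \<Rightarrow> nat \<Rightarrow> real" where
  "t_est N nx ny = rmod (atan2 (2 * real ny / real N - 1) (2 * real nx / real N - 1)) (2 * pi) / (2 * pi)"

definition x_est :: "nat \<Rightarrow> nat \<Rightarrow> nat \<Rightarrow> real" where
  "x_est N nx ny = rmod (t_est N nx ny - 1/6) 1"

definition z_step :: "real \<Rightarrow> real \<Rightarrow> real" where
  "z_step zk xk1 = (let d = rmod (xk1 - 2 * zk) 1 in
     if d < 1/3 then 2 * zk + d
     else if d < 2/3 then 2 * zk + 1/3
     else 2 * zk)"

text \<open>z_aux x j = z(j+1), for a sequence x indexed from 1.\<close>
primrec z_aux :: "(nat \<Rightarrow> real) \<Rightarrow> nat \<Rightarrow> real" where
  "z_aux x 0 = x 1"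
| "z_aux x (Suc j) = z_step (z_aux x j) (x (j + 2))"

definition z_seq :: "(nat \<Rightarrow> real) \<Rightarrow> nat \<Rightarrow> real" where
  "z_seq x k = z_aux x (k - 1)"

definition counts_pmf :: "nat \<Rightarrow> nat \<Rightarrow> real \<Rightarrow> ((nat \<Rightarrow> nat) \<times> (nat \<Rightarrow> nat)) pmf" where
  "counts_pmf l N \<theta> =
     pair_pmf
       (Pi_pmf {1..l} 0 (\<lambda>k. binomial_pmf N ((1 + cos (2 * pi * 2 ^ (k - 1) * \<theta>)) / 2)))
       (Pi_pmf {1..l} 0 (\<lambda>k. binomial_pmf N ((1 + sin (2 * pi * 2 ^ (k - 1) * \<theta>)) / 2)))"

end

theory Submission
  imports Defs
begin

text \<open>
  By Hoeffding's inequality and a union bound over the \<open>2l\<close> binomial counts, with probability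
  at least \<open>1 - 4l exp(-3N/16) \<ge> 1 - \<epsilon>\<close> every relative frequency is within \<open>\<surd>6/8\<close> of its mean.
  Then the point \<open>(2N_x,k/N - 1, 2N_y,k/N - 1)\<close> is within \<open>\<surd>3/2\<close> of \<open>e^(2\<pi>i 2^(k-1)\<theta>)\<close>,
  so its polar angle is off by less than \<open>\<pi>/3\<close>: \<open>t\<^sub>k\<close> is within \<open>1/6\<close> of \<open>2^(k-1)\<theta>\<close> modulo 1, i.e.
  \<open>2^(k-1)\<theta>\<close> lies in the open arc \<open>(x(k), x(k) + 1/3)\<close>. On this event an induction on \<open>k\<close> shows
  that \<open>2^(k-1)(\<theta> + m)\<close> lies in \<open>[z(k), z(k) + 1/3]\<close> for some integer \<open>m\<close>: doubling the
  interval gives \<open>[2z(k), 2z(k) + 2/3]\<close>, which must meet the arc of length \<open>1/3\<close> given by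
  \<open>x(k+1)\<close>, and each branch of the recursion selects the third of it containing \<open>2^k(\<theta> + m)\<close>.
\<close>

lemma rmod_1_eq: "rmod a 1 = a - of_int \<lfloor>a\<rfloor>"
  by (simp add: rmod_def)

lemma rmod_div_eq: "c \<noteq> 0 \<Longrightarrow> rmod a c / c = a / c - of_int \<lfloor>a / c\<rfloor>"
  by (simp add: rmod_def field_simps)

lemma abs_Arg_less_pi_div_3:
  fixes w :: complex
  assumes "norm (w - 1) < sqrt 3 / 2"
  shows "\<bar>Arg w\<bar> < pi / 3"
proof -
  have dist: "(Re w - 1)^2 + (Im w)^2 < 3/4"
  proof -
    have "(norm (w - 1))^2 < (sqrt 3 / 2)^2"
      using assms by (intro power_strict_mono) auto
    then show ?thesis by (simp add: cmod_power2 power_divide)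
  qed
  have "Re w > 0"
  proof (rule ccontr)
    assume "\<not> Re w > 0"
    then have "1 \<le> (1 - Re w)^2" by (intro one_le_power) simp
    then show False
      using dist zero_le_power2[of "Im w"] by (simp add: power2_commute)
  qed
  have "(norm w)^2 < (2 * Re w)^2"
    using dist zero_le_power2[of "2 * Re w - 1/2"] cmod_power2[of w]
    by (simp add: power2_eq_square algebra_simps)
  then have "norm w < 2 * Re w"
    by (rule power2_less_imp_less) (use \<open>Re w > 0\<close> in simp)
  moreover have "w \<noteq> 0" using \<open>Re w > 0\<close> by auto
  ultimately have "cos (Arg w) > 1/2"
    by (simp add: cos_Arg field_simps)
  then have "cos \<bar>Arg w\<bar> > cos (pi / 3)" by (simp add: cos_60)
  moreover have "\<bar>Arg w\<bar> \<le> pi" using Arg_bounded[of w] by linarith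
  ultimately show ?thesis
    using cos_mono_le_eq[of "\<bar>Arg w\<bar>" "pi / 3"] pi_gt_zero by linarith
qed

lemma Arg_close_to_angle:
  assumes "norm (z - cis \<alpha>) < sqrt 3 / 2"
  shows "\<exists>n::int. \<bar>Arg z - \<alpha> - 2 * pi * n\<bar> < pi / 3"
proof -
  define w where "w = z * cis (- \<alpha>)"
  have "w - 1 = (z - cis \<alpha>) * cis (- \<alpha>)"
    by (simp add: w_def algebra_simps cis_mult)
  then have "norm (w - 1) = norm (z - cis \<alpha>)"
    by (simp add: norm_mult)
  then have small: "\<bar>Arg w\<bar> < pi / 3"
    using assms by (intro abs_Arg_less_pi_div_3) simp
  have "sqrt 3 < 2"
    using real_sqrt_less_mono[of 3 4] by simp
  then have "z \<noteq> 0"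
    using assms by auto
  then have "w \<noteq> 0" by (simp add: w_def)
  have "cis (Arg z) = cis (Arg w + \<alpha>)"
  proof -
    have "z = w * cis \<alpha>" by (simp add: w_def cis_mult)
    then have "sgn z = sgn w * cis \<alpha>" by (simp add: sgn_mult)
    then show ?thesis using \<open>z \<noteq> 0\<close> \<open>w \<noteq> 0\<close> by (simp add: cis_Arg flip: cis_mult)
  qed
  then obtain n :: int where "Arg z = Arg w + \<alpha> + 2 * pi * n"
    using sin_cos_eq_iff by (metis cis.sel)
  then show ?thesis using small by (intro exI[of _ n]) simp
qed

text \<open>The success event of stage \<open>k\<close> is \<open>in_open_third_arc (2^(k-1)\<theta>) (x(k))\<close>.\<close>

definition in_open_third_arc :: "real \<Rightarrow> real \<Rightarrow> bool" where
  "in_open_third_arc \<phi> x \<longleftrightarrow> (\<exists>i::int. x < \<phi> - i \<and> \<phi> - i < x + 1/3)"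

lemma t_est_close:
  assumes "\<bar>real nx / real N - (1 + cos (2 * pi * \<phi>)) / 2\<bar> < sqrt 6 / 8"
    and "\<bar>real ny / real N - (1 + sin (2 * pi * \<phi>)) / 2\<bar> < sqrt 6 / 8"
  shows "\<exists>i::int. \<bar>t_est N nx ny - \<phi> - i\<bar> < 1/6"
proof -
  define z where "z = Complex (2 * real nx / real N - 1) (2 * real ny / real N - 1)"
  \<comment> \<open>Each coordinate of \<open>z - cis (2\<pi>\<phi>)\<close> is below \<open>\<surd>6/4\<close>, so its norm is below \<open>\<surd>3/2\<close>.\<close>
  have "(Re z - cos (2 * pi * \<phi>))^2 < 3/8" "(Im z - sin (2 * pi * \<phi>))^2 < 3/8"
  proof -
    have "\<bar>Re z - cos (2 * pi * \<phi>)\<bar> < sqrt 6 / 4" "\<bar>Im z - sin (2 * pi * \<phi>)\<bar> < sqrt 6 / 4"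
      using assms by (simp_all add: z_def field_simps abs_less_iff)
    then show "(Re z - cos (2 * pi * \<phi>))^2 < 3/8" "(Im z - sin (2 * pi * \<phi>))^2 < 3/8"
      using power_strict_mono[of "\<bar>_\<bar>" "sqrt 6 / 4" 2] by (force simp: power_divide)+
  qed
  then have "(norm (z - cis (2 * pi * \<phi>)))^2 < (sqrt 3 / 2)^2"
    by (simp add: cmod_power2 power_divide)
  then have "norm (z - cis (2 * pi * \<phi>)) < sqrt 3 / 2"
    by (rule power2_less_imp_less) simp
  then obtain n :: int where n: "\<bar>Arg z - 2 * pi * \<phi> - 2 * pi * n\<bar> < pi / 3"
    using Arg_close_to_angle by blast
  define F where "F = \<lfloor>Arg z / (2 * pi)\<rfloor>"
  have "t_est N nx ny = Arg z / (2 * pi) - F"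
    by (simp add: t_est_def atan2_def z_def F_def rmod_div_eq)
  moreover have "\<bar>Arg z / (2 * pi) - \<phi> - n\<bar> < 1/6"
    using n pi_gt_zero by (simp add: abs_less_iff field_simps)
  ultimately show ?thesis by (intro exI[of _ "n - F"]) (simp add: algebra_simps)
qed

lemma in_open_third_arc_rmod:
  fixes t \<phi> :: real and i :: int
  assumes "\<bar>t - \<phi> - i\<bar> < 1/6"
  shows "in_open_third_arc \<phi> (rmod (t - 1/6) 1)"
proof -
  have "t - 1/6 < \<phi> + i" "\<phi> + i < t + 1/6"
    using assms unfolding abs_less_iff by auto
  then show ?thesis
    unfolding in_open_third_arc_def rmod_1_eq by (intro exI[of _ "\<lfloor>t - 1/6\<rfloor> - i"]) simp
qed

lemma x_est_in_open_third_arc: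
  assumes "\<bar>real nx / real N - (1 + cos (2 * pi * \<phi>)) / 2\<bar> < sqrt 6 / 8"
    and "\<bar>real ny / real N - (1 + sin (2 * pi * \<phi>)) / 2\<bar> < sqrt 6 / 8"
  shows "in_open_third_arc \<phi> (x_est N nx ny)"
  using t_est_close[OF assms] in_open_third_arc_rmod unfolding x_est_def by blast

lemma in_open_third_arc_add_of_int:
  fixes \<phi> :: real and k :: int
  shows "in_open_third_arc (\<phi> + k) x \<longleftrightarrow> in_open_third_arc \<phi> x"
proof
  assume "in_open_third_arc (\<phi> + k) x"
  then obtain i :: int where "x < \<phi> + k - i" "\<phi> + k - i < x + 1/3"
    unfolding in_open_third_arc_def by blast
  then show "in_open_third_arc \<phi> x"
    unfolding in_open_third_arc_def by (intro exI[of _ "i - k"]) simp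
next
  assume "in_open_third_arc \<phi> x"
  then obtain i :: int where "x < \<phi> - i" "\<phi> - i < x + 1/3"
    unfolding in_open_third_arc_def by blast
  then show "in_open_third_arc (\<phi> + k) x"
    unfolding in_open_third_arc_def by (intro exI[of _ "i + k"]) simp
qed

lemma z_step_tracks:
  assumes "z \<le> u" "u \<le> z + 1/3" and "in_open_third_arc (2 * u) x"
  shows "z_step z x \<le> 2 * u \<and> 2 * u \<le> z_step z x + 1/3"
proof -
  obtain i :: int where i: "x < 2 * u - i" "2 * u - i < x + 1/3"
    using assms(3) unfolding in_open_third_arc_def by blast
  define d where "d = rmod (x - 2 * z) 1"
  define n where "n = i + \<lfloor>x - 2 * z\<rfloor>"
  have d: "0 \<le> d" "d < 1" "2 * u = 2 * z + d + (2 * u - x - i) + n"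
    unfolding d_def n_def rmod_1_eq by linarith+
  \<comment> \<open>\<open>n\<close> is the integer offset between the arc \<open>(x, x + 1/3)\<close> and \<open>[2z, 2z + 2/3]\<close>.\<close>
  then have "-2 < real_of_int n" "real_of_int n < 1"
    using assms(1,2) i by linarith+
  then have "n = 0 \<or> n = -1" by linarith
  then have "real_of_int n = 0 \<or> real_of_int n = -1" by auto
  then show ?thesis
    using d i assms(1,2) unfolding z_step_def Let_def d_def[symmetric] by auto
qed

lemma z_aux_tracks:
  assumes "\<forall>k\<in>{1..j+1}. in_open_third_arc (2 ^ (k - 1) * \<theta>) (x k)"
  shows "\<exists>m::int. z_aux x j \<le> 2 ^ j * (\<theta> + m) \<and> 2 ^ j * (\<theta> + m) \<le> z_aux x j + 1/3"
  using assms
proof (induction j)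
  case 0
  then obtain i :: int where "x 1 < \<theta> - i" "\<theta> - i < x 1 + 1/3"
    unfolding in_open_third_arc_def by fastforce
  then show ?case by (intro exI[of _ "-i"]) simp
next
  case (Suc j)
  then obtain m :: int where m: "z_aux x j \<le> 2 ^ j * (\<theta> + m)" "2 ^ j * (\<theta> + m) \<le> z_aux x j + 1/3"
    by auto
  have "in_open_third_arc (2 ^ Suc j * \<theta>) (x (j + 2))"
    using Suc.prems[rule_format, of "j + 2"] by simp
  then have "in_open_third_arc (2 * (2 ^ j * (\<theta> + m))) (x (j + 2))"
    using in_open_third_arc_add_of_int[of _ "2 ^ Suc j * m"] by (simp add: algebra_simps)
  from z_step_tracks[OF m this] show ?case
    by (intro exI[of _ m]) (simp add: algebra_simps)
qed

lemma z_seq_brackets: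
  assumes "l \<ge> 1" and "\<forall>k\<in>{1..l}. in_open_third_arc (2 ^ (k - 1) * \<theta>) (x k)"
  shows "\<exists>m::int. z_seq x l / 2 ^ (l - 1) \<le> \<theta> + m \<and> \<theta> + m \<le> (z_seq x l + 1/3) / 2 ^ (l - 1)"
proof -
  obtain m :: int where "z_aux x (l - 1) \<le> 2 ^ (l - 1) * (\<theta> + m)"
    "2 ^ (l - 1) * (\<theta> + m) \<le> z_aux x (l - 1) + 1/3"
    using z_aux_tracks[of "l - 1" \<theta> x] assms by auto
  then show ?thesis
    unfolding z_seq_def by (intro exI[of _ m]) (simp add: field_simps)
qed

lemma on_arc_of_int_shift:
  fixes \<theta> a b :: real and m :: int
  assumes "0 \<le> \<theta>" "\<theta> < 1" and "a \<le> \<theta> + m" "\<theta> + m \<le> b"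
  shows "on_arc \<theta> a b"
proof -
  have "\<lfloor>\<theta> + m\<rfloor> = m" using assms(1,2) by (simp add: floor_eq_iff)
  then show ?thesis
    unfolding on_arc_def using assms(3,4) by (intro exI[of _ "\<theta> + m"]) (simp add: rmod_1_eq)
qed

lemma rmod_1_add_of_int:
  fixes e :: real and k :: int
  assumes "0 \<le> e" "e < 1"
  shows "rmod (e + k) 1 = e"
  using assms by (simp add: rmod_1_eq floor_eq_iff)

lemma circ_dist_rmod_le:
  fixes c \<theta> :: real and m :: int
  assumes "\<bar>c - \<theta> - m\<bar> < 1"
  shows "circ_dist (rmod c 1) \<theta> \<le> \<bar>c - \<theta> - m\<bar>"
proof -
  define e where "e = c - \<theta> - m"
  have shift: "rmod c 1 - \<theta> = e + of_int (m - \<lfloor>c\<rfloor>)" "\<theta> - rmod c 1 = - e + of_int (\<lfloor>c\<rfloor> - m)"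
    by (simp_all add: e_def rmod_1_eq)
  show ?thesis
  proof (cases "e \<ge> 0")
    case True
    then have "rmod (rmod c 1 - \<theta>) 1 = e"
      using assms unfolding shift e_def[symmetric] by (intro rmod_1_add_of_int) auto
    then show ?thesis using True unfolding circ_dist_def e_def by simp
  next
    case False
    then have "rmod (\<theta> - rmod c 1) 1 = - e"
      using assms unfolding shift e_def[symmetric] by (intro rmod_1_add_of_int) auto
    then show ?thesis using False unfolding circ_dist_def e_def by simp
  qed
qed

lemma z_seq_on_arc_and_close:
  assumes "l \<ge> 1" "0 \<le> \<theta>" "\<theta> < 1"
    and "\<forall>k\<in>{1..l}. in_open_third_arc (2 ^ (k - 1) * \<theta>) (x k)"
  shows "on_arc \<theta> (z_seq x l / 2 ^ (l - 1)) ((z_seq x l + 1/3) / 2 ^ (l - 1))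
    \<and> circ_dist (rmod ((z_seq x l + 1/6) / 2 ^ (l - 1)) 1) \<theta> \<le> 1 / (3 * 2 ^ l)"
proof -
  define P :: real where "P = 2 ^ (l - 1)"
  define c where "c = (z_seq x l + 1/6) / P"
  obtain m :: int where m: "z_seq x l / P \<le> \<theta> + m" "\<theta> + m \<le> (z_seq x l + 1/3) / P"
    using z_seq_brackets[OF assms(1,4)] unfolding P_def by blast
  have "P \<ge> 1" by (simp add: P_def)
  then have "z_seq x l / P = c - 1 / (6 * P)" "(z_seq x l + 1/3) / P = c + 1 / (6 * P)"
    by (simp_all add: c_def field_simps)
  moreover have "1 / (6 * P) = 1 / (3 * 2 ^ l)"
    using assms(1) by (simp add: P_def flip: power_Suc)
  moreover have "1 / (3 * 2 ^ l) < (1::real)"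
  proof -
    have "(1::real) < 3 * 2 ^ l" using one_le_power[of "2::real" l] by linarith
    then show ?thesis by simp
  qed
  ultimately have "\<bar>c - \<theta> - m\<bar> \<le> 1 / (3 * 2 ^ l)" "\<bar>c - \<theta> - m\<bar> < 1"
    using m by linarith+
  then have "circ_dist (rmod c 1) \<theta> \<le> 1 / (3 * 2 ^ l)"
    using circ_dist_rmod_le[of c \<theta> m] by linarith
  then show ?thesis
    using on_arc_of_int_shift[OF assms(2,3) m] unfolding P_def c_def by blast
qed

lemma map_counts_pmf_fst:
  assumes "k \<in> {1..l}"
  shows "map_pmf (\<lambda>w. fst w k) (counts_pmf l N \<theta>) =
    binomial_pmf N ((1 + cos (2 * pi * 2 ^ (k - 1) * \<theta>)) / 2)"
proof -
  have "map_pmf (\<lambda>w. fst w k) (counts_pmf l N \<theta>) = map_pmf (\<lambda>f. f k) (map_pmf fst (counts_pmf l N \<theta>))"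
    by (simp add: map_pmf_comp)
  then show ?thesis
    unfolding counts_pmf_def map_fst_pair_pmf using assms by (simp add: Pi_pmf_component)
qed

lemma map_counts_pmf_snd:
  assumes "k \<in> {1..l}"
  shows "map_pmf (\<lambda>w. snd w k) (counts_pmf l N \<theta>) =
    binomial_pmf N ((1 + sin (2 * pi * 2 ^ (k - 1) * \<theta>)) / 2)"
proof -
  have "map_pmf (\<lambda>w. snd w k) (counts_pmf l N \<theta>) = map_pmf (\<lambda>f. f k) (map_pmf snd (counts_pmf l N \<theta>))"
    by (simp add: map_pmf_comp)
  then show ?thesis
    unfolding counts_pmf_def map_snd_pair_pmf using assms by (simp add: Pi_pmf_component)
qed

lemma one_plus_cos_half_in_unit: "(1 + cos x) / 2 \<in> {0..1::real}"
  using cos_ge_minus_one[of x] cos_le_one[of x] by (simp del: cos_ge_minus_one cos_le_one)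

lemma one_plus_sin_half_in_unit: "(1 + sin x) / 2 \<in> {0..1::real}"
  using sin_ge_minus_one[of x] sin_le_one[of x] by (simp del: sin_ge_minus_one sin_le_one)

lemma prob_binomial_marginal_deviation:
  assumes "map_pmf g M = binomial_pmf N p" "p \<in> {0..1}" "N > 0" "\<delta> \<ge> 0"
  shows "measure_pmf.prob M {w. \<delta> \<le> \<bar>real (g w) / real N - p\<bar>} \<le> 2 * exp (- 2 * real N * \<delta>\<^sup>2)"
proof -
  interpret binomial_distribution N p
    using assms(2) by unfold_locales
  have "measure_pmf.prob M {w. \<delta> \<le> \<bar>real (g w) / real N - p\<bar>}
      = measure_pmf.prob (map_pmf g M) {x. \<delta> \<le> \<bar>real x / real N - p\<bar>}"
    by (simp add: measure_map_pmf vimage_def)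
  then show ?thesis
    using prob_abs_ge'[OF assms(3,4)] assms(1) by simp
qed

definition accurate_counts :: "nat \<Rightarrow> nat \<Rightarrow> real \<Rightarrow> real \<Rightarrow> ((nat \<Rightarrow> nat) \<times> (nat \<Rightarrow> nat)) set" where
  "accurate_counts l N \<theta> \<delta> = {(nx, ny). \<forall>k\<in>{1..l}.
     \<bar>real (nx k) / real N - (1 + cos (2 * pi * 2 ^ (k - 1) * \<theta>)) / 2\<bar> < \<delta> \<and>
     \<bar>real (ny k) / real N - (1 + sin (2 * pi * 2 ^ (k - 1) * \<theta>)) / 2\<bar> < \<delta>}"

lemma prob_accurate_counts:
  assumes "N > 0" "\<delta> \<ge> 0"
  shows "measure_pmf.prob (counts_pmf l N \<theta>) (accurate_counts l N \<theta> \<delta>)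
    \<ge> 1 - 4 * real l * exp (- 2 * real N * \<delta>\<^sup>2)"
proof -
  define M where "M = counts_pmf l N \<theta>"
  define p where "p k = (1 + cos (2 * pi * 2 ^ (k - 1) * \<theta>)) / 2" for k :: nat
  define q where "q k = (1 + sin (2 * pi * 2 ^ (k - 1) * \<theta>)) / 2" for k :: nat
  define A :: "nat \<Rightarrow> ((nat \<Rightarrow> nat) \<times> (nat \<Rightarrow> nat)) set"
    where "A k = {w. \<delta> \<le> \<bar>real (fst w k) / real N - p k\<bar>}" for k
  define B :: "nat \<Rightarrow> ((nat \<Rightarrow> nat) \<times> (nat \<Rightarrow> nat)) set"
    where "B k = {w. \<delta> \<le> \<bar>real (snd w k) / real N - q k\<bar>}" for k
  have bound: "measure_pmf.prob M (A k \<union> B k) \<le> 4 * exp (- 2 * real N * \<delta>\<^sup>2)"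
    if "k \<in> {1..l}" for k
  proof -
    have "measure_pmf.prob M (A k) \<le> 2 * exp (- 2 * real N * \<delta>\<^sup>2)"
      "measure_pmf.prob M (B k) \<le> 2 * exp (- 2 * real N * \<delta>\<^sup>2)"
      unfolding A_def B_def M_def p_def q_def
      by (intro prob_binomial_marginal_deviation assms map_counts_pmf_fst map_counts_pmf_snd that
          one_plus_cos_half_in_unit one_plus_sin_half_in_unit)+
    then show ?thesis
      using measure_Un_le[of "A k" M "B k"] by simp
  qed
  have "- accurate_counts l N \<theta> \<delta> = (\<Union>k\<in>{1..l}. A k \<union> B k)"
    unfolding accurate_counts_def A_def B_def p_def q_def by auto
  then have "measure_pmf.prob M (- accurate_counts l N \<theta> \<delta>) \<le> (\<Sum>k\<in>{1..l}. measure_pmf.prob M (A k \<union> B k))"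
    by (simp add: measure_pmf.finite_measure_subadditive_finite)
  also have "\<dots> \<le> (\<Sum>k\<in>{1..l}. 4 * exp (- 2 * real N * \<delta>\<^sup>2))"
    by (rule sum_mono) (rule bound)
  also have "\<dots> = 4 * real l * exp (- 2 * real N * \<delta>\<^sup>2)"
    by simp
  finally show ?thesis
    using measure_pmf.prob_compl[of "accurate_counts l N \<theta> \<delta>" M]
    unfolding M_def by (simp add: Compl_eq_Diff_UNIV)
qed

lemma accurate_counts_locate:
  assumes "l \<ge> 1" "0 \<le> \<theta>" "\<theta> < 1" and "(nx, ny) \<in> accurate_counts l N \<theta> (sqrt 6 / 8)"
  defines "z \<equiv> z_seq (\<lambda>k. x_est N (nx k) (ny k)) l"
  shows "on_arc \<theta> (z / 2 ^ (l - 1)) ((z + 1/3) / 2 ^ (l - 1))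
    \<and> circ_dist (rmod ((z + 1/6) / 2 ^ (l - 1)) 1) \<theta> \<le> 1 / (3 * 2 ^ l)"
proof -
  have "\<forall>k\<in>{1..l}. in_open_third_arc (2 ^ (k - 1) * \<theta>) (x_est N (nx k) (ny k))"
    using assms(4) by (auto simp: accurate_counts_def mult.assoc intro!: x_est_in_open_third_arc)
  from z_seq_on_arc_and_close[OF assms(1-3) this] show ?thesis
    unfolding z_def .
qed

lemma exp_tail_le_of_sample_size:
  assumes "0 < \<epsilon>" "l \<ge> 1" "real N \<ge> 5.34 * ln (4 * real l / \<epsilon>)"
  shows "4 * real l * exp (- 3 * real N / 16) \<le> \<epsilon>"
proof -
  have "534 / 100 * ln (4 * real l / \<epsilon>) \<le> real N"
    using assms(3) by simp
  then have "ln (4 * real l / \<epsilon>) \<le> 3 * real N / 16"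
    using of_nat_0_le_iff[of N] by linarith
  then have "exp (- 3 * real N / 16) \<le> exp (- ln (4 * real l / \<epsilon>))"
    by simp
  also have "\<dots> = \<epsilon> / (4 * real l)"
    using assms(1,2) by (simp add: exp_minus)
  finally show ?thesis
    using assms(1,2) by (simp add: field_simps)
qed

theorem mainTheorem4:
  fixes l N :: nat and \<epsilon> \<theta> :: real
  assumes "l \<ge> 1" and "0 < \<epsilon>" and "\<epsilon> < 1"
    and "0 \<le> \<theta>" and "\<theta> < 1"
    and "N \<ge> 1" and "real N \<ge> 5.34 * ln (4 * real l / \<epsilon>)"
  shows "measure_pmf.prob (counts_pmf l N \<theta>)
           {(nx, ny). on_arc \<theta> (z_seq (\<lambda>k. x_est N (nx k) (ny k)) l / 2 ^ (l - 1))
                               ((z_seq (\<lambda>k. x_est N (nx k) (ny k)) l + 1/3) / 2 ^ (l - 1))}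
         \<ge> 1 - \<epsilon> \<and>
         measure_pmf.prob (counts_pmf l N \<theta>)
           {(nx, ny). circ_dist
                (rmod ((z_seq (\<lambda>k. x_est N (nx k) (ny k)) l + 1/6) / 2 ^ (l - 1)) 1) \<theta>
              \<le> 1 / (3 * 2 ^ l)}
         \<ge> 1 - \<epsilon>"
proof -
  let ?M = "counts_pmf l N \<theta>" and ?G = "accurate_counts l N \<theta> (sqrt 6 / 8)"
  let ?z = "\<lambda>nx ny. z_seq (\<lambda>k. x_est N (nx k) (ny k)) l"
  let ?E\<^sub>1 = "{(nx, ny). on_arc \<theta> (?z nx ny / 2 ^ (l - 1)) ((?z nx ny + 1/3) / 2 ^ (l - 1))}"
  let ?E\<^sub>2 = "{(nx, ny). circ_dist (rmod ((?z nx ny + 1/6) / 2 ^ (l - 1)) 1) \<theta> \<le> 1 / (3 * 2 ^ l)}"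
  have exponent: "- 2 * real N * (sqrt 6 / 8)\<^sup>2 = - 3 * real N / 16"
    by (simp add: power_divide)
  have "measure_pmf.prob ?M ?G \<ge> 1 - 4 * real l * exp (- 3 * real N / 16)"
    using prob_accurate_counts[of N "sqrt 6 / 8" l \<theta>] assms(6) unfolding exponent by simp
  then have "measure_pmf.prob ?M ?G \<ge> 1 - \<epsilon>"
    using exp_tail_le_of_sample_size[OF assms(2,1,7)] by linarith
  moreover have "?G \<subseteq> ?E\<^sub>1" "?G \<subseteq> ?E\<^sub>2"
    using accurate_counts_locate[OF assms(1,4,5)] by auto
  then have "measure_pmf.prob ?M ?G \<le> measure_pmf.prob ?M ?E\<^sub>1"
    "measure_pmf.prob ?M ?G \<le> measure_pmf.prob ?M ?E\<^sub>2"
    by (simp_all add: measure_pmf.finite_measure_mono)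
  ultimately show ?thesis
    by linarith
qed

end
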